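(* Let $t(x_1,\dots,x_n)$ be a term in the language of strong quasi-MV* algebras containing at least one occurrence of $\oplus$. Then for all $\langle a_1,b_1\rangle,\dots,\langle a_n,b_n\rangle\in S^*$, $$t^{\mathbf{S^*}}(\langle a_1,b_1\rangle,\dots,\langle a_n,b_n\rangle)=t^{\mathbf{S^*}}(\langle a_1,0\rangle,\dots,\langle a_n,0\rangle)=\langle z,0\rangle$$ for some $z\in[-1,1]$.
   Context: Terms in the language of strong quasi-MV* algebras are built from variables and constants $0,1$ using a binary operation $\oplus$ and unary operations $-,{}^+,{}^-$. $\mathbf{S^*}$ is the algebra with universe $S^*=[-1,1]\times[-1,1]\subseteq\mathbb{R}^2$ and operations $\langle a,b\rangle\oplus\langle c,d\rangle=\langle\max\{-1,\min\{1,a+c\}\},0\rangle$, $-\langle a,b\rangle=\langle -a,-b\rangle$, $\langle a,b\rangle^+=\langle\max\{0,a\},0\rangle$, $\langle a,b\rangle^-=\langle\min\{0,a\},0\rangle$, $0=\langle 0,0\rangle$, $1=\langle 1,0\rangle$; $t^{\mathbf{S^*}}$ denotes the term function of $t$ on $\mathbf{S^*}$. *)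

theory Defs
  imports Main "HOL.Real"
begin

datatype sqmv_term =
    Var nat
  | Zero
  | One
  | Oplus sqmv_term sqmv_term
  | Neg sqmv_term
  | Pos_part sqmv_term
  | Neg_part sqmv_term

definition Sstar :: "(real \<times> real) set" where
  "Sstar = {-1..1} \<times> {-1..1}"

definition S_oplus :: "real \<times> real \<Rightarrow> real \<times> real \<Rightarrow> real \<times> real" where
  "S_oplus x y = (max (-1) (min 1 (fst x + fst y)), 0)"

definition S_neg :: "real \<times> real \<Rightarrow> real \<times> real" where
  "S_neg x = (- fst x, - snd x)"

definition S_pos :: "real \<times> real \<Rightarrow> real \<times> real" where
  "S_pos x = (max 0 (fst x), 0)"

definition S_negp :: "real \<times> real \<Rightarrow> real \<times> real" where
  "S_negp x = (min 0 (fst x), 0)"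

fun eval_S :: "(nat \<Rightarrow> real \<times> real) \<Rightarrow> sqmv_term \<Rightarrow> real \<times> real" where
  "eval_S env (Var i) = env i"
| "eval_S env Zero = (0, 0)"
| "eval_S env One = (1, 0)"
| "eval_S env (Oplus s t) = S_oplus (eval_S env s) (eval_S env t)"
| "eval_S env (Neg s) = S_neg (eval_S env s)"
| "eval_S env (Pos_part s) = S_pos (eval_S env s)"
| "eval_S env (Neg_part s) = S_negp (eval_S env s)"

fun term_vars :: "sqmv_term \<Rightarrow> nat set" where
  "term_vars (Var i) = {i}"
| "term_vars Zero = {}"
| "term_vars One = {}"
| "term_vars (Oplus s t) = term_vars s \<union> term_vars t"
| "term_vars (Neg s) = term_vars s"
| "term_vars (Pos_part s) = term_vars s"
| "term_vars (Neg_part s) = term_vars s"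

fun has_oplus :: "sqmv_term \<Rightarrow> bool" where
  "has_oplus (Var i) = False"
| "has_oplus Zero = False"
| "has_oplus One = False"
| "has_oplus (Oplus s t) = True"
| "has_oplus (Neg s) = has_oplus s"
| "has_oplus (Pos_part s) = has_oplus s"
| "has_oplus (Neg_part s) = has_oplus s"

end

theory Submission
  imports Defs
begin

text \<open>The first coordinate of every operation of \<open>S*\<close> depends only on the first coordinates
  of its arguments, and every operation except negation outputs second coordinate 0, which
  negation preserves. So the second coordinates of the inputs never matter, and a term
  containing \<open>\<oplus>\<close> has second coordinate 0 above its outermost \<open>\<oplus>\<close>.\<close>

lemma fst_eval_S_cong:
  assumes "\<And>i. i \<in> term_vars t \<Longrightarrow> fst (env i) = fst (env' i)"
  shows "fst (eval_S env t) = fst (eval_S env' t)"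
  using assms by (induction t) (auto simp: S_oplus_def S_neg_def S_pos_def S_negp_def)

lemma snd_eval_S_eq_0:
  assumes "has_oplus t"
  shows "snd (eval_S env t) = 0"
  using assms by (induction t) (auto simp: S_oplus_def S_neg_def S_pos_def S_negp_def)

lemma eval_S_in_Sstar:
  assumes "\<And>i. i \<in> term_vars t \<Longrightarrow> env i \<in> Sstar"
  shows "eval_S env t \<in> Sstar"
  using assms
  by (induction t) (auto simp: Sstar_def S_oplus_def S_neg_def S_pos_def S_negp_def mem_Times_iff)

lemma eval_S_eq_fst_0:
  assumes "has_oplus t"
  shows "eval_S env t = (fst (eval_S env t), 0)"
  using snd_eval_S_eq_0[OF assms] by (simp add: prod_eq_iff)

theorem lemma3p4:
  fixes t :: sqmv_term and n :: nat and env :: "nat \<Rightarrow> real \<times> real"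
  assumes "term_vars t \<subseteq> {..<n}"
    and "has_oplus t"
    and "\<forall>i<n. env i \<in> Sstar"
  shows "eval_S env t = eval_S (\<lambda>i. (fst (env i), 0)) t
         \<and> (\<exists>z\<in>{-1..1}. eval_S env t = (z, 0))"
proof
  let ?env0 = "\<lambda>i. (fst (env i), 0)"
  have "fst (eval_S env t) = fst (eval_S ?env0 t)"
    by (rule fst_eval_S_cong) simp
  then show "eval_S env t = eval_S ?env0 t"
    using eval_S_eq_fst_0[OF assms(2), of env] eval_S_eq_fst_0[OF assms(2), of ?env0] by simp
next
  have "eval_S env t \<in> Sstar"
    using assms(1,3) by (intro eval_S_in_Sstar) auto
  then have "fst (eval_S env t) \<in> {-1..1}"
    by (auto simp: Sstar_def mem_Times_iff)
  with eval_S_eq_fst_0[OF assms(2)] show "\<exists>z\<in>{-1..1}. eval_S env t = (z, 0)" by blast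
qed

end
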